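(* Let $f:[-1,1]\to\mathbb{R}$ and $\epsilon_0>0$, and let $P:[-1,1]\to\mathbb{C}$ be a polynomial with $\max_{x\in[-1,1]}|f(x)-P(x)|\le\epsilon_0$. Let $\gamma:=\max_{x\in[-1,1]}|f(x)|$ and assume $\epsilon_0\le\gamma$. Let $\ket{\psi}=\sum_{j=1}^N\psi_j\ket{j}$ with $\psi_j\in\mathbb{R}$ and $\|\ket{\psi}\|_2=1$, and define $\mathcal{N}^2:=\sum_{j=1}^N|f(\psi_j)|^2>0$ and $\mathcal{N}_1^2:=\sum_{j=1}^N|P(\psi_j)|^2$. Then (i) $\max_{x\in[-1,1]}|P(x)|\le 2\gamma$; (ii) $|\mathcal{N}-\mathcal{N}_1|\le 3\gamma\epsilon_0N/\mathcal{N}$; (iii) if moreover $\epsilon_0\le\frac{\mathcal{N}^2}{6\gamma N}$, then $\mathcal{N}_1\ge\frac12\mathcal{N}$. *)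

theory Defs
  imports "HOL-Analysis.Analysis" "HOL-Computational_Algebra.Polynomial"
begin

end

theory Submission
  imports Defs
begin

text \<open>Since \<open>f\<close> is within \<open>\<epsilon>0\<close> of the continuous \<open>P\<close> on the compact \<open>[-1,1]\<close>, it is bounded,
  so \<open>\<bar>f\<bar> \<le> \<gamma>\<close> there and hence \<open>\<bar>P\<bar> \<le> \<gamma> + \<epsilon>0 \<le> 2\<gamma>\<close>. All \<open>\<psi>\<^sub>j\<close> lie in \<open>[-1,1]\<close> because the
  vector is normalised, so \<open>\<bar>f(\<psi>\<^sub>j)\<^sup>2 - \<bar>P(\<psi>\<^sub>j)\<bar>\<^sup>2\<bar> \<le> \<epsilon>0 (\<gamma> + 2\<gamma>)\<close>. Summing gives
  \<open>\<bar>\<N>\<^sup>2 - \<N>\<^sub>1\<^sup>2\<bar> \<le> 3\<gamma>\<epsilon>0 N\<close>, and dividing by \<open>\<N> + \<N>\<^sub>1 \<ge> \<N>\<close> gives (ii);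
  (iii) is (ii) with the right-hand side bounded by \<open>\<N>/2\<close>.\<close>

lemma norm_le_SUP_if_near_continuous:
  fixes f g :: "'a::topological_space \<Rightarrow> 'b::real_normed_vector"
  assumes "compact S" "continuous_on S g" "\<forall>x\<in>S. norm (f x - g x) \<le> e" "x \<in> S"
  shows "norm (f x) \<le> (SUP y\<in>S. norm (f y))"
proof -
  obtain B where B: "\<forall>y\<in>S. norm (g y) \<le> B"
    using compact_imp_bounded[OF compact_continuous_image[OF assms(2,1)]]
    by (auto simp: bounded_iff)
  have "norm (f y) \<le> B + e" if "y \<in> S" for y
    using norm_triangle_ineq2[of "f y" "g y"] B assms(3) that by fastforce
  then have "bdd_above ((\<lambda>y. norm (f y)) ` S)"
    by (intro bdd_aboveI2) auto
  then show ?thesis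
    using assms(4) by (rule cSUP_upper2) simp
qed

lemma abs_le_one_if_sum_squares_eq_one:
  fixes \<psi> :: "'a \<Rightarrow> real"
  assumes "finite A" "j \<in> A" "(\<Sum>i\<in>A. (\<psi> i)\<^sup>2) = 1"
  shows "\<bar>\<psi> j\<bar> \<le> 1"
proof -
  have "(\<psi> j)\<^sup>2 \<le> (\<Sum>i\<in>A. (\<psi> i)\<^sup>2)"
    by (rule member_le_sum) (use assms in auto)
  then show ?thesis
    using assms(3) by (simp add: abs_square_le_1)
qed

lemma abs_diff_squares_le:
  fixes a b :: real
  assumes "0 \<le> a" "0 \<le> b" "\<bar>a - b\<bar> \<le> e" "a \<le> A" "b \<le> B"
  shows "\<bar>a\<^sup>2 - b\<^sup>2\<bar> \<le> e * (A + B)"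
proof -
  have "a\<^sup>2 - b\<^sup>2 = (a - b) * (a + b)"
    by (simp add: power2_eq_square algebra_simps)
  then have "\<bar>a\<^sup>2 - b\<^sup>2\<bar> = \<bar>a - b\<bar> * (a + b)"
    using assms(1,2) by (simp add: abs_mult)
  also have "\<dots> \<le> e * (A + B)"
    using assms by (intro mult_mono) auto
  finally show ?thesis .
qed

lemma abs_sum_diff_le_card_mult:
  fixes u v :: "'a \<Rightarrow> real"
  assumes "\<forall>j\<in>A. \<bar>u j - v j\<bar> \<le> c"
  shows "\<bar>sum u A - sum v A\<bar> \<le> real (card A) * c"
proof -
  have "\<bar>sum u A - sum v A\<bar> \<le> (\<Sum>j\<in>A. \<bar>u j - v j\<bar>)"
    by (simp add: sum_abs flip: sum_subtractf)
  also have "\<dots> \<le> real (card A) * c"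
    using assms by (intro sum_bounded_above) auto
  finally show ?thesis .
qed

lemma abs_sum_squares_diff_le:
  fixes u v :: "'a \<Rightarrow> real"
  assumes "\<forall>j\<in>A. 0 \<le> u j \<and> 0 \<le> v j \<and> \<bar>u j - v j\<bar> \<le> e \<and> u j \<le> a \<and> v j \<le> b"
  shows "\<bar>(\<Sum>j\<in>A. (u j)\<^sup>2) - (\<Sum>j\<in>A. (v j)\<^sup>2)\<bar> \<le> real (card A) * (e * (a + b))"
  using assms by (intro abs_sum_diff_le_card_mult ballI abs_diff_squares_le) auto

lemma abs_diff_le_abs_diff_squares_div:
  fixes a b :: real
  assumes "0 < a" "0 \<le> b"
  shows "\<bar>a - b\<bar> \<le> \<bar>a\<^sup>2 - b\<^sup>2\<bar> / a"
proof -
  have "\<bar>a - b\<bar> * a \<le> \<bar>a - b\<bar> * (a + b)"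
    using assms by (intro mult_left_mono) auto
  also have "\<dots> = \<bar>(a - b) * (a + b)\<bar>"
    using assms by (simp add: abs_mult)
  also have "\<dots> = \<bar>a\<^sup>2 - b\<^sup>2\<bar>"
    by (simp add: power2_eq_square algebra_simps)
  finally show ?thesis
    using assms(1) by (simp add: pos_le_divide_eq)
qed

lemma half_le_if_abs_diff_le_div:
  fixes a b c :: real
  assumes "0 < a" "\<bar>a - b\<bar> \<le> c / a" "2 * c \<le> a\<^sup>2"
  shows "a / 2 \<le> b"
proof -
  have "c / a \<le> a / 2"
    using assms(1,3) by (simp add: pos_divide_le_eq power2_eq_square)
  then show ?thesis
    using assms(2) by linarith
qed

theorem lemma12:
  fixes f :: "real \<Rightarrow> real" and \<epsilon>0 \<gamma> :: real and P :: "complex poly"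
    and N :: nat and \<psi> :: "nat \<Rightarrow> real" and NN NN1 :: real
  assumes eps_pos: "\<epsilon>0 > 0"
    and approx: "\<forall>x\<in>{-1..1}. cmod (complex_of_real (f x) - poly P (complex_of_real x)) \<le> \<epsilon>0"
    and gamma_def: "\<gamma> = (SUP x\<in>{-1..1::real}. \<bar>f x\<bar>)"
    and eps_le: "\<epsilon>0 \<le> \<gamma>"
    and psi_norm: "(\<Sum>j=1..N. (\<psi> j)\<^sup>2) = 1"
    and NN_def: "NN = sqrt (\<Sum>j=1..N. \<bar>f (\<psi> j)\<bar>\<^sup>2)"
    and NN_pos: "NN\<^sup>2 > 0"
    and NN1_def: "NN1 = sqrt (\<Sum>j=1..N. (cmod (poly P (complex_of_real (\<psi> j))))\<^sup>2)"
  shows "(\<forall>x\<in>{-1..1}. cmod (poly P (complex_of_real x)) \<le> 2 * \<gamma>)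
     \<and> \<bar>NN - NN1\<bar> \<le> 3 * \<gamma> * \<epsilon>0 * real N / NN
     \<and> (\<epsilon>0 \<le> NN\<^sup>2 / (6 * \<gamma> * real N) \<longrightarrow> NN1 \<ge> NN / 2)"
proof -
  define p where "p x = cmod (poly P (complex_of_real x))" for x
  have close: "\<bar>\<bar>f x\<bar> - p x\<bar> \<le> \<epsilon>0" if "x \<in> {-1..1}" for x
    using norm_triangle_ineq3 approx that unfolding p_def by (metis norm_of_real order_trans)
  have "continuous_on {-1..1} (\<lambda>x. poly P (complex_of_real x))"
    by (intro continuous_intros)
  then have f_le: "\<bar>f x\<bar> \<le> \<gamma>" if "x \<in> {-1..1}" for x
    using norm_le_SUP_if_near_continuous[of "{-1..1}" _ "\<lambda>x. complex_of_real (f x)"] approx that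
    unfolding gamma_def by auto
  have p_le: "p x \<le> 2 * \<gamma>" if "x \<in> {-1..1}" for x
    using close[OF that] f_le[OF that] eps_le by linarith
  have "\<forall>j\<in>{1..N}. \<psi> j \<in> {-1..1}"
    using abs_le_one_if_sum_squares_eq_one[OF _ _ psi_norm] by (auto simp: abs_le_iff)
  then have "\<bar>(\<Sum>j=1..N. \<bar>f (\<psi> j)\<bar>\<^sup>2) - (\<Sum>j=1..N. (p (\<psi> j))\<^sup>2)\<bar>
      \<le> real (card {1..N}) * (\<epsilon>0 * (\<gamma> + 2 * \<gamma>))"
    using close f_le p_le by (intro abs_sum_squares_diff_le) (auto simp: p_def)
  then have sums: "\<bar>NN\<^sup>2 - NN1\<^sup>2\<bar> \<le> 3 * \<gamma> * \<epsilon>0 * real N"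
    unfolding NN_def NN1_def p_def by (simp add: sum_nonneg algebra_simps)
  have "NN \<ge> 0" "NN1 \<ge> 0"
    unfolding NN_def NN1_def by (simp_all add: sum_nonneg)
  then have "NN > 0"
    using NN_pos by (simp add: less_le)
  have "\<bar>NN - NN1\<bar> \<le> \<bar>NN\<^sup>2 - NN1\<^sup>2\<bar> / NN"
    using \<open>NN > 0\<close> \<open>NN1 \<ge> 0\<close> by (rule abs_diff_le_abs_diff_squares_div)
  also have "\<dots> \<le> 3 * \<gamma> * \<epsilon>0 * real N / NN"
    using sums \<open>NN > 0\<close> by (simp add: divide_right_mono)
  finally have ii: "\<bar>NN - NN1\<bar> \<le> 3 * \<gamma> * \<epsilon>0 * real N / NN" .
  have "NN1 \<ge> NN / 2" if "\<epsilon>0 \<le> NN\<^sup>2 / (6 * \<gamma> * real N)"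
  proof -
    have "N \<noteq> 0"
      using that eps_pos by (cases "N = 0") auto
    moreover have "\<gamma> > 0"
      using eps_pos eps_le by linarith
    ultimately have "2 * (3 * \<gamma> * \<epsilon>0 * real N) \<le> NN\<^sup>2"
      using that by (simp add: pos_le_divide_eq mult_ac)
    then show ?thesis
      using half_le_if_abs_diff_le_div \<open>NN > 0\<close> ii by blast
  qed
  then show ?thesis
    using p_le ii unfolding p_def by blast
qed

end
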